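(* For $u_1,\dots,u_k\in\mathcal B$ let $R'(u_1,\dots,u_k)=\sum_{n=0}^\infty\sum_{j\in\{1,\dots,k\}^n}R'[u_{j(1)},\dots,u_{j(n)}]$ (formal series). Then for every $v\in\mathcal B$, $R'(u_1,\dots,u_k)v=v+R'(u_1,\dots,u_k)\Big(\gamma\Big[\big(\textstyle\sum_{i=1}^ku_i\big)\,R'(u_1,\dots,u_k)\big(\textstyle\sum_{j=1}^ku_j\big)\Big]v\Big)+R'(u_1,\dots,u_k)\Big(\textstyle\sum_{i=1}^k\Lambda(u_i\otimes v)\Big)$, as formal series.
   Context: Let $\mathcal B$ be a unital $*$-algebra with star-linear maps $\gamma:\mathcal B\to\mathcal B$ and $\Lambda:\mathcal B\otimes_{alg}\mathcal B\to\mathcal B$. The linear operators $R'[u_1,\dots,u_m]$ on $\mathcal B$ ($m\ge0$) are defined recursively: $R'[\emptyset]=\mathrm{id}_{\mathcal B}$, and $R'[u_1,\dots,u_m]=\sum_{\pi\in\mathrm{Int}(m)}w(V_1)\circ\cdots\circ w(V_r)$, where $\mathrm{Int}(m)$ is the set of interval partitions of $\{1,\dots,m\}$, $V_1,\dots,V_r$ are the blocks of $\pi$ from left to right, $w(\{i\})$ is $v\mapsto\Lambda(u_i\otimes v)$, and for a block $V=\{p,\dots,q\}$ with $q>p$, $w(V)$ is left multiplication by $\gamma\big[u_p\,R'[u_{p+1},\dots,u_{q-1}](u_q)\big]$. *)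

theory Defs
  imports Complex_Main
begin

definition star_algebra :: "(complex \<Rightarrow> 'a::{ring,monoid_mult} \<Rightarrow> 'a) \<Rightarrow> ('a \<Rightarrow> 'a) \<Rightarrow> bool" where
  "star_algebra sc st \<longleftrightarrow>
     (\<forall>a b x. sc (a + b) x = sc a x + sc b x) \<and>
     (\<forall>a x y. sc a (x + y) = sc a x + sc a y) \<and>
     (\<forall>a b x. sc (a * b) x = sc a (sc b x)) \<and>
     (\<forall>x. sc 1 x = x) \<and>
     (\<forall>a x y. sc a (x * y) = sc a x * y \<and> sc a (x * y) = x * sc a y) \<and>
     (\<forall>x. st (st x) = x) \<and>
     (\<forall>x y. st (x + y) = st x + st y) \<and>
     (\<forall>a x. st (sc a x) = sc (cnj a) (st x)) \<and>
     (\<forall>x y. st (x * y) = st y * st x)"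

definition star_linear :: "(complex \<Rightarrow> 'a::{ring,monoid_mult} \<Rightarrow> 'a) \<Rightarrow> ('a \<Rightarrow> 'a) \<Rightarrow> ('a \<Rightarrow> 'a) \<Rightarrow> bool" where
  "star_linear sc st f \<longleftrightarrow>
     (\<forall>x y. f (x + y) = f x + f y) \<and> (\<forall>a x. f (sc a x) = sc a (f x)) \<and>
     (\<forall>x. f (st x) = st (f x))"

text \<open>A star-linear map on the algebraic tensor product B \<otimes> B, represented (via the
  universal property) by the bilinear map L with L x y = \<Lambda>(x \<otimes> y); the involution
  on B \<otimes> B is (x \<otimes> y)* = x* \<otimes> y*.\<close>
definition star_bilinear :: "(complex \<Rightarrow> 'a::{ring,monoid_mult} \<Rightarrow> 'a) \<Rightarrow> ('a \<Rightarrow> 'a) \<Rightarrow> ('a \<Rightarrow> 'a \<Rightarrow> 'a) \<Rightarrow> bool" where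
  "star_bilinear sc st L \<longleftrightarrow>
     (\<forall>x y z. L (x + y) z = L x z + L y z) \<and> (\<forall>x y z. L x (y + z) = L x y + L x z) \<and>
     (\<forall>a x y. L (sc a x) y = sc a (L x y)) \<and> (\<forall>a x y. L x (sc a y) = sc a (L x y)) \<and>
     (\<forall>x y. L (st x) (st y) = st (L x y))"

definition interval_partitions :: "'b list \<Rightarrow> 'b list list set" where
  "interval_partitions us = {bs. concat bs = us \<and> (\<forall>b\<in>set bs. b \<noteq> [])}"

fun compose_all :: "('a \<Rightarrow> 'a) list \<Rightarrow> 'a \<Rightarrow> 'a" where
  "compose_all [] = id"
| "compose_all (f # fs) = f \<circ> compose_all fs"

function Rp :: "('a::{ring,monoid_mult} \<Rightarrow> 'a) \<Rightarrow> ('a \<Rightarrow> 'a \<Rightarrow> 'a) \<Rightarrow> 'a list \<Rightarrow> 'a \<Rightarrow> 'a" where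
  "Rp \<gamma> L us =
    (if us = [] then id
     else (\<lambda>v. \<Sum>bs\<in>interval_partitions us.
             compose_all (map (\<lambda>b. if length b = 1 then (\<lambda>w. L (hd b) w)
                                   else (\<lambda>w. \<gamma> (hd b * Rp \<gamma> L (butlast (tl b)) (last b)) * w)) bs) v))"
  by pat_completeness auto
termination
proof (relation "measure (\<lambda>(\<gamma>, L, us). length us)")
  show "wf (measure (\<lambda>(\<gamma>, L, us). length us))" by simp
next
  fix \<gamma> L and us :: "'a list" and v bs b
  assume "us \<noteq> []" "bs \<in> interval_partitions us" "b \<in> set bs"
  then have "length b \<le> length us"
  proof -
    assume h: "us \<noteq> []" "bs \<in> interval_partitions us" "b \<in> set bs"
    then have "concat bs = us" by (simp add: interval_partitions_def)
    moreover obtain xs ys where "bs = xs @ b # ys" using h(3) by (meson split_list)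
    ultimately show ?thesis by auto
  qed
  moreover assume "length b \<noteq> 1"
  ultimately show "((\<gamma>, L, butlast (tl b)), \<gamma>, L, us) \<in> measure (\<lambda>(\<gamma>, L, us). length us)"
    using \<open>us \<noteq> []\<close> by (cases us) auto
qed

declare Rp.simps[simp del]

text \<open>Degree-n homogeneous part of the formal series
  R'(u_1,...,u_k) = \<Sum>_n \<Sum>_{j \<in> {1..k}^n} R'[u_{j(1)},...,u_{j(n)}], applied to v.\<close>
definition Rdeg :: "('a::{ring,monoid_mult} \<Rightarrow> 'a) \<Rightarrow> ('a \<Rightarrow> 'a \<Rightarrow> 'a) \<Rightarrow> (nat \<Rightarrow> 'a) \<Rightarrow> nat \<Rightarrow> nat \<Rightarrow> 'a \<Rightarrow> 'a" where
  "Rdeg \<gamma> L u k n v = (\<Sum>js\<in>{js. length js = n \<and> set js \<subseteq> {1..k}}. Rp \<gamma> L (map u js) v)"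

end

theory Submission
  imports Defs
begin

text \<open>Every interval partition of a nonempty word ends with a block; splitting it off
  expresses R'[u_1,...,u_m] v as a sum over the position of that last block. Summing
  over all words of length n, the last block is either a singleton, which contributes
  the \<Lambda>-term, or a block [u_p,...,u_q] with q > p, whose interior word ranges
  independently over all words of length n - 2 - a: this gives the \<gamma>-term. The
  hypotheses on the *-structure are only used through additivity of \<gamma> and of
  \<Lambda> in its second argument.\<close>

lemma interval_partitions_Nil: "interval_partitions [] = {[]}"
  unfolding interval_partitions_def by auto

lemma interval_partitions_by_last_block:
  assumes "us \<noteq> []"
  shows "interval_partitions us =
    (\<Union>i<length us. (\<lambda>bs. bs @ [drop i us]) ` interval_partitions (take i us))"
proof (intro equalityI subsetI)
  fix bs assume "bs \<in> interval_partitions us"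
  then have concat: "concat bs = us" and nonempty: "\<forall>b\<in>set bs. b \<noteq> []"
    by (auto simp: interval_partitions_def)
  then obtain bs' b where bs: "bs = bs' @ [b]"
    using assms by (metis concat.simps(1) rev_exhaust)
  define i where "i = length (concat bs')"
  have "i < length us" "drop i us = b" "bs' \<in> interval_partitions (take i us)"
    using concat nonempty bs by (auto simp: i_def interval_partitions_def)
  then show "bs \<in> (\<Union>i<length us. (\<lambda>bs. bs @ [drop i us]) ` interval_partitions (take i us))"
    using bs by blast
next
  fix bs assume "bs \<in> (\<Union>i<length us. (\<lambda>bs. bs @ [drop i us]) ` interval_partitions (take i us))"
  then obtain i bs' where "i < length us" "bs' \<in> interval_partitions (take i us)"
    and "bs = bs' @ [drop i us]" by blast
  then show "bs \<in> interval_partitions us"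
    by (auto simp: interval_partitions_def)
qed

lemma finite_interval_partitions: "finite (interval_partitions us)"
proof (induction "length us" arbitrary: us rule: less_induct)
  case less
  then show ?case
    by (cases "us = []") (simp_all add: interval_partitions_Nil interval_partitions_by_last_block)
qed

lemma compose_all_append: "compose_all (fs @ gs) = compose_all fs \<circ> compose_all gs"
  by (induction fs) auto

lemma additive_compose_all: "\<forall>f\<in>set fs. additive f \<Longrightarrow> additive (compose_all fs)"
  by (induction fs) (auto simp: additive_def)

definition block_op :: "('a::{ring,monoid_mult} \<Rightarrow> 'a) \<Rightarrow> ('a \<Rightarrow> 'a \<Rightarrow> 'a) \<Rightarrow> 'a list \<Rightarrow> 'a \<Rightarrow> 'a" where
  "block_op \<gamma> L b = (if length b = 1 then (\<lambda>w. L (hd b) w)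
                       else (\<lambda>w. \<gamma> (hd b * Rp \<gamma> L (butlast (tl b)) (last b)) * w))"

lemma Rp_Nil: "Rp \<gamma> L [] v = v"
  by (simp add: Rp.simps)

lemma Rp_eq_sum_interval_partitions:
  "Rp \<gamma> L us v = (\<Sum>bs\<in>interval_partitions us. compose_all (map (block_op \<gamma> L) bs) v)"
  unfolding block_op_def by (subst Rp.simps) (auto simp: interval_partitions_Nil)

lemma Rp_by_last_block:
  assumes "us \<noteq> []"
  shows "Rp \<gamma> L us v = (\<Sum>i<length us. Rp \<gamma> L (take i us) (block_op \<gamma> L (drop i us) v))"
proof -
  let ?P = "\<lambda>i. (\<lambda>bs. bs @ [drop i us]) ` interval_partitions (take i us)"
  have disjoint: "?P i \<inter> ?P j = {}" if "i < length us" "j < length us" "i \<noteq> j" for i j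
  proof -
    have "length (drop i us) \<noteq> length (drop j us)"
      using that by simp
    then show ?thesis
      by (auto simp del: length_drop)
  qed
  have "Rp \<gamma> L us v = (\<Sum>i<length us. \<Sum>bs\<in>?P i. compose_all (map (block_op \<gamma> L) bs) v)"
    unfolding Rp_eq_sum_interval_partitions interval_partitions_by_last_block[OF assms]
    by (rule sum.UNION_disjoint) (auto simp: finite_interval_partitions disjoint)
  also have "\<dots> = (\<Sum>i<length us. Rp \<gamma> L (take i us) (block_op \<gamma> L (drop i us) v))"
    by (simp add: sum.reindex inj_on_def Rp_eq_sum_interval_partitions compose_all_append)
  finally show ?thesis .
qed

lemma additive_Rp:
  assumes "\<And>a. additive (L a)"
  shows "additive (Rp \<gamma> L us)"
proof -
  have "additive (block_op \<gamma> L b)" for b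
    using assms by (auto simp: block_op_def additive_def distrib_left)
  then have "additive (\<lambda>v. compose_all (map (block_op \<gamma> L) bs) v)" for bs
    by (simp add: additive_compose_all)
  then show ?thesis
    unfolding additive_def Rp_eq_sum_interval_partitions by (simp add: sum.distrib)
qed

definition words :: "'b set \<Rightarrow> nat \<Rightarrow> 'b list set" where
  "words A n = {xs. length xs = n \<and> set xs \<subseteq> A}"

lemma words_0: "words A 0 = {[]}"
  by (auto simp: words_def)

lemma words_add: "words A (m + n) = (\<lambda>(xs, ys). xs @ ys) ` (words A m \<times> words A n)"
proof (intro equalityI subsetI)
  fix zs assume "zs \<in> words A (m + n)"
  then have "take m zs \<in> words A m" "drop m zs \<in> words A n"
    by (auto simp: words_def dest: in_set_takeD in_set_dropD)
  then show "zs \<in> (\<lambda>(xs, ys). xs @ ys) ` (words A m \<times> words A n)"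
    by (intro image_eqI[where x = "(take m zs, drop m zs)"]) auto
qed (auto simp: words_def)

lemma sum_words_add:
  "(\<Sum>zs\<in>words A (m + n). f zs) = (\<Sum>xs\<in>words A m. \<Sum>ys\<in>words A n. f (xs @ ys))"
proof -
  have "inj_on (\<lambda>(xs, ys). xs @ ys) (words A m \<times> words A n)"
    by (auto simp: inj_on_def words_def)
  then show ?thesis
    by (simp add: words_add sum.reindex sum.cartesian_product case_prod_unfold)
qed

lemma sum_words_1: "(\<Sum>xs\<in>words A 1. f xs) = (\<Sum>a\<in>A. f [a])"
proof -
  have "words A 1 = (\<lambda>a. [a]) ` A"
    by (auto simp: words_def length_Suc_conv)
  then show ?thesis
    by (simp add: sum.reindex inj_on_def)
qed

lemma Rdeg_eq_sum_words: "Rdeg \<gamma> L u k n v = (\<Sum>js\<in>words {1..k} n. Rp \<gamma> L (map u js) v)"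
  unfolding Rdeg_def words_def ..

lemma Rdeg_0: "Rdeg \<gamma> L u k 0 v = v"
  by (simp add: Rdeg_eq_sum_words words_0 Rp_Nil)

definition Rdeg_last_block ::
  "('a::{ring,monoid_mult} \<Rightarrow> 'a) \<Rightarrow> ('a \<Rightarrow> 'a \<Rightarrow> 'a) \<Rightarrow> (nat \<Rightarrow> 'a) \<Rightarrow> nat \<Rightarrow> nat \<Rightarrow> nat \<Rightarrow> 'a \<Rightarrow> 'a" where
  "Rdeg_last_block \<gamma> L u k n i v =
     (\<Sum>js\<in>words {1..k} n. Rp \<gamma> L (map u (take i js)) (block_op \<gamma> L (map u (drop i js)) v))"

lemma Rdeg_Suc_eq_sum_last_block:
  "Rdeg \<gamma> L u k (Suc m) v = (\<Sum>i<Suc m. Rdeg_last_block \<gamma> L u k (Suc m) i v)"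
proof -
  have split: "Rp \<gamma> L (map u js) v =
      (\<Sum>i<Suc m. Rp \<gamma> L (map u (take i js)) (block_op \<gamma> L (map u (drop i js)) v))"
    if "js \<in> words {1..k} (Suc m)" for js
  proof -
    have "map u js \<noteq> []" "length js = Suc m"
      using that by (auto simp: words_def)
    then show ?thesis
      by (simp add: Rp_by_last_block take_map drop_map)
  qed
  show ?thesis
    unfolding Rdeg_eq_sum_words Rdeg_last_block_def sum.swap[where A = "{..<Suc m}"]
    by (intro sum.cong refl split)
qed

lemma Rdeg_last_block_singleton:
  assumes "\<And>a. additive (L a)"
  shows "Rdeg_last_block \<gamma> L u k (Suc m) m v = Rdeg \<gamma> L u k m (\<Sum>i=1..k. L (u i) v)"
proof -
  have "Rdeg_last_block \<gamma> L u k (Suc m) m v =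
      (\<Sum>xs\<in>words {1..k} m. \<Sum>j=1..k. Rp \<gamma> L (map u xs) (L (u j) v))"
    unfolding Rdeg_last_block_def Suc_eq_plus1 sum_words_add sum_words_1
    by (intro sum.cong refl) (simp add: words_def block_op_def)
  then show ?thesis
    by (simp add: Rdeg_eq_sum_words additive.sum[OF additive_Rp[OF assms]])
qed

lemma Rdeg_last_block_long:
  assumes "\<And>a. additive (L a)" and "additive \<gamma>" and "i < m"
  shows "Rdeg_last_block \<gamma> L u k (Suc m) i v =
    Rdeg \<gamma> L u k i (\<gamma> ((\<Sum>p=1..k. u p) * Rdeg \<gamma> L u k (m - 1 - i) (\<Sum>q=1..k. u q)) * v)"
proof -
  note Rp_sum = additive.sum[OF additive_Rp[OF assms(1)]]
  note \<gamma>_sum = additive.sum[OF assms(2)]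
  have length: "Suc m = i + (1 + (m - 1 - i + 1))"
    using assms(3) by simp
  have "Rdeg_last_block \<gamma> L u k (Suc m) i v =
      (\<Sum>xs\<in>words {1..k} i. \<Sum>p=1..k. \<Sum>ys\<in>words {1..k} (m - 1 - i). \<Sum>q=1..k.
         Rp \<gamma> L (map u xs) (\<gamma> (u p * Rp \<gamma> L (map u ys) (u q)) * v))"
    unfolding Rdeg_last_block_def length sum_words_add sum_words_1
    by (intro sum.cong refl) (simp add: words_def block_op_def butlast_append)
  also have "\<dots> = (\<Sum>xs\<in>words {1..k} i. Rp \<gamma> L (map u xs)
      (\<gamma> (\<Sum>p=1..k. \<Sum>ys\<in>words {1..k} (m - 1 - i). \<Sum>q=1..k. u p * Rp \<gamma> L (map u ys) (u q)) * v))"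
    by (simp add: Rp_sum \<gamma>_sum sum_distrib_right)
  also have "(\<Sum>p=1..k. \<Sum>ys\<in>words {1..k} (m - 1 - i). \<Sum>q=1..k. u p * Rp \<gamma> L (map u ys) (u q)) =
      (\<Sum>p=1..k. u p) * Rdeg \<gamma> L u k (m - 1 - i) (\<Sum>q=1..k. u q)"
    unfolding Rdeg_eq_sum_words Rp_sum by (simp only: sum_distrib_right) (simp only: sum_distrib_left)
  finally show ?thesis
    by (simp only: Rdeg_eq_sum_words)
qed

theorem corollary3p14:
  fixes sc :: "complex \<Rightarrow> 'a::{ring,monoid_mult} \<Rightarrow> 'a" and st :: "'a \<Rightarrow> 'a"
    and \<gamma> :: "'a \<Rightarrow> 'a" and L :: "'a \<Rightarrow> 'a \<Rightarrow> 'a"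
    and u :: "nat \<Rightarrow> 'a" and k n :: nat and v :: 'a
  assumes "star_algebra sc st" and "star_linear sc st \<gamma>" and "star_bilinear sc st L"
  shows "Rdeg \<gamma> L u k n v =
           (if n = 0 then v else 0)
         + (\<Sum>a<n - 1. Rdeg \<gamma> L u k a
              (\<gamma> ((\<Sum>i=1..k. u i) * Rdeg \<gamma> L u k (n - 2 - a) (\<Sum>j=1..k. u j)) * v))
         + (if n = 0 then 0 else Rdeg \<gamma> L u k (n - 1) (\<Sum>i=1..k. L (u i) v))"
proof (cases n)
  case 0
  then show ?thesis by (simp add: Rdeg_0)
next
  case (Suc m)
  have L_additive: "\<And>a. additive (L a)" and \<gamma>_additive: "additive \<gamma>"
    using assms(2,3) by (simp_all add: additive_def star_bilinear_def star_linear_def)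
  have "Rdeg \<gamma> L u k (Suc m) v =
      (\<Sum>i<m. Rdeg_last_block \<gamma> L u k (Suc m) i v) + Rdeg_last_block \<gamma> L u k (Suc m) m v"
    by (simp add: Rdeg_Suc_eq_sum_last_block)
  also have "\<dots> = (\<Sum>i<m. Rdeg \<gamma> L u k i
        (\<gamma> ((\<Sum>p=1..k. u p) * Rdeg \<gamma> L u k (m - 1 - i) (\<Sum>q=1..k. u q)) * v))
      + Rdeg \<gamma> L u k m (\<Sum>i=1..k. L (u i) v)"
    by (simp add: Rdeg_last_block_long[OF L_additive \<gamma>_additive]
        Rdeg_last_block_singleton[OF L_additive])
  finally show ?thesis
    using Suc by simp
qed

end
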